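(* Let $c:[0,\infty)\to[0,\infty)$ be arbitrary and let the phase field function $\psi:\mathbb{R}\to[0,\infty)$ have mass $\int_{\mathbb{R}}\psi\,dy=w>0$ and maximum value $\hat\psi=\max_{y\in\mathbb{R}}\psi(y)$. Then $F^c[\psi]\geq\frac{(\hat\psi/2)^3}{w/2}$.
   Context: For $c:[0,\infty)\to[0,\infty)$ and $\psi:\mathbb{R}\to\mathbb{R}$ (with locally integrable weak derivative; otherwise the energy is $+\infty$), $F^c[\psi]=\int_{\mathbb{R}}\frac12|\psi'(y)|^2+c(|\psi(y)|)\,dy$. *)

theory Defs
  imports "HOL-Analysis.Analysis"
begin

definition test_function :: "(real \<Rightarrow> real) \<Rightarrow> bool" where
  "test_function \<phi> \<longleftrightarrow>
     (\<forall>n. \<forall>x. ((deriv ^^ n) \<phi>) differentiable (at x)) \<and>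
     bounded (closure {x. \<phi> x \<noteq> 0})"

definition locally_integrable :: "(real \<Rightarrow> real) \<Rightarrow> bool" where
  "locally_integrable f \<longleftrightarrow>
     (\<forall>a b. set_integrable lborel {a..b} f)"

definition weak_deriv :: "(real \<Rightarrow> real) \<Rightarrow> (real \<Rightarrow> real) \<Rightarrow> bool" where
  "weak_deriv \<psi> g \<longleftrightarrow>
     locally_integrable \<psi> \<and> locally_integrable g \<and>
     (\<forall>\<phi>. test_function \<phi> \<longrightarrow>
        (\<integral>y. \<psi> y * deriv \<phi> y \<partial>lborel) = - (\<integral>y. g y * \<phi> y \<partial>lborel))"

text \<open>The energy F^c[psi]; +infinity if psi has no locally integrable weak derivative.
  Weak derivatives agree a.e., so the choice of g is irrelevant.\<close>
definition energy :: "(real \<Rightarrow> real) \<Rightarrow> (real \<Rightarrow> real) \<Rightarrow> ennreal" where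
  "energy c \<psi> =
     (if \<exists>g. weak_deriv \<psi> g
      then (\<integral>\<^sup>+ y. ennreal ((1/2) * \<bar>(SOME g. weak_deriv \<psi> g) y\<bar>^2 + c \<bar>\<psi> y\<bar>) \<partial>lborel)
      else top)"

end

theory Submission
  imports Defs
begin

(* Let y0 be a maximum point of psi and h = psi_max / 2. The component (a, b) of the superlevel
   set {psi > h} containing y0 has length at most w / h, because psi > h on it and psi has mass w.
   On each of (a, y0) and (y0, b) psi changes by at least h. For a continuous psi with weak
   derivative g this change is the integral of g over the interval (test the weak derivative
   against smooth plateau functions built from exp (-1/x) and let the plateau fill the interval),
   so by Cauchy-Schwarz the Dirichlet part of the energy is at least
   h^2 / (2 (y0 - a)) + h^2 / (2 (b - y0)) >= 2 h^2 / (b - a) >= 2 h^3 / w = (psi_max / 2)^3 / (w / 2).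
   The potential term c >= 0 is dropped. *)

definition differentiable_upto :: "nat \<Rightarrow> (real \<Rightarrow> real) \<Rightarrow> bool" where
  "differentiable_upto n f \<longleftrightarrow> (\<forall>j\<le>n. \<forall>x. (deriv ^^ j) f differentiable (at x))"

lemma differentiable_upto_0: "differentiable_upto 0 f \<longleftrightarrow> (\<forall>x. f differentiable (at x))"
  by (simp add: differentiable_upto_def)

lemma differentiable_upto_Suc:
  "differentiable_upto (Suc n) f \<longleftrightarrow> (\<forall>x. f differentiable (at x)) \<and> differentiable_upto n (deriv f)"
proof -
  have shift: "(deriv ^^ Suc j) f = (deriv ^^ j) (deriv f)" for j
    by (simp add: funpow_Suc_right del: funpow.simps)
  show ?thesis
    unfolding differentiable_upto_def
    by (metis (no_types, lifting) Suc_le_mono funpow_0 le0 not0_implies_Suc shift)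
qed

lemma differentiable_upto_imp_DERIV:
  "differentiable_upto n f \<Longrightarrow> (f has_real_derivative deriv f x) (at x)"
  unfolding differentiable_upto_def DERIV_deriv_iff_real_differentiable by (metis funpow_0 le0)

lemma differentiable_upto_imp_isCont: "differentiable_upto n f \<Longrightarrow> isCont f x"
  using differentiable_upto_imp_DERIV DERIV_isCont by blast

lemma differentiable_upto_SucD: "differentiable_upto (Suc n) f \<Longrightarrow> differentiable_upto n f"
  by (simp add: differentiable_upto_def)

lemma differentiable_upto_deriv:
  "(\<And>x. (f has_real_derivative f' x) (at x)) \<Longrightarrow> differentiable_upto n f' \<Longrightarrow>
    differentiable_upto (Suc n) f"
  unfolding differentiable_upto_Suc
  by (metis DERIV_imp_deriv ext real_differentiable_def)

lemma differentiable_upto_add: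
  "differentiable_upto n f \<Longrightarrow> differentiable_upto n g \<Longrightarrow> differentiable_upto n (\<lambda>x. f x + g x)"
proof (induction n arbitrary: f g)
  case 0
  then show ?case by (auto simp: differentiable_upto_0)
next
  case (Suc n)
  show ?case
    using Suc differentiable_upto_imp_DERIV[OF Suc.prems(1)] differentiable_upto_imp_DERIV[OF Suc.prems(2)]
    by (intro differentiable_upto_deriv[where f' = "\<lambda>x. deriv f x + deriv g x"] derivative_intros)
       (auto simp: differentiable_upto_Suc)
qed

lemma differentiable_upto_cmult:
  "differentiable_upto n f \<Longrightarrow> differentiable_upto n (\<lambda>x. c * f x)"
proof (induction n arbitrary: f)
  case 0
  then show ?case by (auto simp: differentiable_upto_0)
next
  case (Suc n)
  show ?case
    using Suc differentiable_upto_imp_DERIV[OF Suc.prems]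
    by (intro differentiable_upto_deriv[where f' = "\<lambda>x. c * deriv f x"] DERIV_cmult)
       (auto simp: differentiable_upto_Suc)
qed

lemma differentiable_upto_diff:
  "differentiable_upto n f \<Longrightarrow> differentiable_upto n g \<Longrightarrow> differentiable_upto n (\<lambda>x. f x - g x)"
  using differentiable_upto_add[of n f "\<lambda>x. (-1) * g x"] differentiable_upto_cmult[of n g "-1"]
  by simp

lemma differentiable_upto_mult:
  "differentiable_upto n f \<Longrightarrow> differentiable_upto n g \<Longrightarrow> differentiable_upto n (\<lambda>x. f x * g x)"
proof (induction n arbitrary: f g)
  case 0
  then show ?case by (auto simp: differentiable_upto_0)
next
  case (Suc n)
  have "differentiable_upto n (\<lambda>x. deriv f x * g x + f x * deriv g x)"
    using Suc differentiable_upto_SucD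
    by (intro differentiable_upto_add) (auto simp: differentiable_upto_Suc)
  then show ?case
    using differentiable_upto_imp_DERIV[OF Suc.prems(1)] differentiable_upto_imp_DERIV[OF Suc.prems(2)]
    by (intro differentiable_upto_deriv[where f' = "\<lambda>x. deriv f x * g x + f x * deriv g x"])
       (auto intro!: derivative_eq_intros)
qed

lemma DERIV_compose_affine_deriv:
  assumes "differentiable_upto n f"
  shows "((\<lambda>x. f (a * x + b)) has_real_derivative a * deriv f (a * x + b)) (at x)"
proof -
  have "((\<lambda>x. a * x + b) has_real_derivative a) (at x)"
    by (auto intro!: derivative_eq_intros)
  from DERIV_chain2[OF differentiable_upto_imp_DERIV[OF assms] this] show ?thesis
    by (simp add: mult.commute)
qed

lemma differentiable_upto_compose_affine:
  "differentiable_upto n f \<Longrightarrow> differentiable_upto n (\<lambda>x. f (a * x + b))"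
proof (induction n arbitrary: f)
  case 0
  show ?case
    using DERIV_compose_affine_deriv[OF 0] unfolding differentiable_upto_0 real_differentiable_def by blast
next
  case (Suc n)
  then have "differentiable_upto n (\<lambda>x. a * deriv f (a * x + b))"
    by (intro differentiable_upto_cmult) (auto simp: differentiable_upto_Suc)
  then show ?case
    by (rule differentiable_upto_deriv[OF DERIV_compose_affine_deriv[OF Suc.prems]])
qed

lemma differentiable_upto_inverse:
  "differentiable_upto n f \<Longrightarrow> (\<And>x. f x \<noteq> 0) \<Longrightarrow> differentiable_upto n (\<lambda>x. inverse (f x))"
proof (induction n arbitrary: f)
  case 0
  then show ?case
    unfolding differentiable_upto_0 by (auto intro: differentiable_compose)
next
  case (Suc n)
  have "((\<lambda>x. inverse (f x)) has_real_derivative (-1) * (deriv f x * (inverse (f x) * inverse (f x)))) (at x)" for x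
    using DERIV_inverse_fun[OF differentiable_upto_imp_DERIV[OF Suc.prems(1)] Suc.prems(2)]
    by simp
  moreover have "differentiable_upto n (\<lambda>x. (-1) * (deriv f x * (inverse (f x) * inverse (f x))))"
    using Suc differentiable_upto_SucD
    by (intro differentiable_upto_cmult differentiable_upto_mult) (auto simp: differentiable_upto_Suc)
  ultimately show ?case by (rule differentiable_upto_deriv)
qed

lemma test_functionI:
  assumes "\<And>n. differentiable_upto n \<phi>" and "bounded (closure {x. \<phi> x \<noteq> 0})"
  shows "test_function \<phi>"
  using assms unfolding test_function_def differentiable_upto_def by blast

(* The extra power x^k makes the family closed under differentiation (DERIV_flat_exp),
   so smoothness follows by induction on the order. *)
definition flat_exp :: "nat \<Rightarrow> real \<Rightarrow> real" where
  "flat_exp k x = (if x > 0 then exp (- 1 / x) / x ^ k else 0)"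

lemma flat_exp_nonneg: "flat_exp k x \<ge> 0"
  by (simp add: flat_exp_def)

lemma flat_exp_pos: "x > 0 \<Longrightarrow> flat_exp 0 x > 0"
  by (simp add: flat_exp_def)

lemma flat_exp_eq_0: "x \<le> 0 \<Longrightarrow> flat_exp k x = 0"
  by (simp add: flat_exp_def)

lemma tendsto_exp_minus_inverse_div_power: "((\<lambda>x::real. exp (- 1 / x) / x ^ k) \<longlongrightarrow> 0) (at_right 0)"
proof -
  have "((\<lambda>x. (inverse x) ^ k / exp (inverse x)) \<longlongrightarrow> (0::real)) (at_right 0)"
    by (rule filterlim_compose[OF tendsto_power_div_exp_0 filterlim_inverse_at_top_right])
  moreover have "\<forall>\<^sub>F x in at_right (0::real). (inverse x) ^ k / exp (inverse x) = exp (- 1 / x) / x ^ k"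
    by (rule eventually_mono[OF eventually_at_right_less])
       (simp add: exp_minus power_inverse divide_inverse mult.commute)
  ultimately show ?thesis
    by (rule Lim_transform_eventually)
qed

lemma DERIV_flat_exp_at_0: "(flat_exp k has_real_derivative 0) (at 0)"
proof -
  have "((\<lambda>h. (flat_exp k (0 + h) - flat_exp k 0) / h) \<longlongrightarrow> 0) (at_right 0)"
  proof (rule Lim_transform_eventually[OF tendsto_exp_minus_inverse_div_power[of "k + 1"]])
    show "\<forall>\<^sub>F h in at_right 0. exp (- 1 / h) / h ^ (k + 1) = (flat_exp k (0 + h) - flat_exp k 0) / h"
      by (rule eventually_mono[OF eventually_at_right_less]) (simp add: flat_exp_def power_Suc2)
  qed
  moreover have "((\<lambda>h. (flat_exp k (0 + h) - flat_exp k 0) / h) \<longlongrightarrow> 0) (at_left 0)"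
  proof (rule Lim_transform_eventually[OF tendsto_const])
    show "\<forall>\<^sub>F h in at_left 0. 0 = (flat_exp k (0 + h) - flat_exp k 0) / h"
      by (rule eventually_mono[OF eventually_at_left_real[of "-1"]]) (auto simp: flat_exp_def)
  qed
  ultimately show ?thesis
    unfolding DERIV_def by (simp add: filterlim_at_split)
qed

lemma DERIV_flat_exp: "(flat_exp k has_real_derivative flat_exp (k + 2) x - real k * flat_exp (k + 1) x) (at x)"
proof -
  consider "x > 0" | "x < 0" | "x = 0" by linarith
  then show ?thesis
  proof cases
    case 1
    have "((\<lambda>y. exp (- 1 / y) / y ^ k) has_real_derivative
        (exp (- 1 / x) * (1 / x\<^sup>2) * x ^ k - exp (- 1 / x) * (real k * x ^ (k - 1))) / (x ^ k)\<^sup>2) (at x)"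
      using 1 by (auto intro!: derivative_eq_intros simp: power2_eq_square)
    moreover have "(exp (- 1 / x) * (1 / x\<^sup>2) * x ^ k - exp (- 1 / x) * (real k * x ^ (k - 1))) / (x ^ k)\<^sup>2
        = flat_exp (k + 2) x - real k * flat_exp (k + 1) x"
      using 1 by (cases k) (simp_all add: flat_exp_def power2_eq_square field_simps)
    moreover have "\<forall>\<^sub>F y in nhds x. flat_exp k y = exp (- 1 / y) / y ^ k"
      using eventually_nhds_in_open[of "{0<..}" x] 1 by (auto elim!: eventually_mono simp: flat_exp_def)
    ultimately show ?thesis
      using DERIV_cong_ev by fastforce
  next
    case 2
    have "\<forall>\<^sub>F y in nhds x. flat_exp k y = 0"
      using eventually_nhds_in_open[of "{..<0}" x] 2 by (auto elim!: eventually_mono simp: flat_exp_def)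
    then have "(flat_exp k has_real_derivative 0) (at x)"
      using DERIV_cong_ev[OF refl _ refl, of "flat_exp k" "\<lambda>_. 0"] by simp
    then show ?thesis
      using 2 by (simp add: flat_exp_eq_0)
  next
    case 3
    then show ?thesis
      using DERIV_flat_exp_at_0 by (simp add: flat_exp_eq_0)
  qed
qed

lemma differentiable_upto_flat_exp: "differentiable_upto n (flat_exp k)"
proof (induction n arbitrary: k)
  case 0
  show ?case
    using DERIV_flat_exp real_differentiable_def by (auto simp: differentiable_upto_0)
next
  case (Suc n)
  show ?case
    using Suc by (intro differentiable_upto_deriv[OF DERIV_flat_exp] differentiable_upto_diff differentiable_upto_cmult)
qed

definition smooth_step :: "real \<Rightarrow> real" where
  "smooth_step t = flat_exp 0 t / (flat_exp 0 t + flat_exp 0 (1 - t))"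

definition smooth_step' :: "real \<Rightarrow> real" where
  "smooth_step' t = (flat_exp 2 t * flat_exp 0 (1 - t) + flat_exp 0 t * flat_exp 2 (1 - t))
     / (flat_exp 0 t + flat_exp 0 (1 - t))\<^sup>2"

lemma smooth_step_denominator_pos: "flat_exp 0 t + flat_exp 0 (1 - t) > 0"
proof (cases "t > 0")
  case True
  then show ?thesis using flat_exp_pos[of t] flat_exp_nonneg[of 0 "1 - t"] by simp
next
  case False
  then show ?thesis using flat_exp_pos[of "1 - t"] flat_exp_nonneg[of 0 t] by simp
qed

lemma DERIV_smooth_step: "(smooth_step has_real_derivative smooth_step' t) (at t)"
proof -
  define A B a b where "A = flat_exp 0 t" and "B = flat_exp 0 (1 - t)"
    and "a = flat_exp 2 t" and "b = flat_exp 2 (1 - t)"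
  have dA: "(flat_exp 0 has_real_derivative a) (at t)"
    using DERIV_flat_exp[of 0 t] by (simp add: a_def numeral_2_eq_2)
  have "((\<lambda>t. 1 - t) has_real_derivative -1) (at t)"
    by (auto intro!: derivative_eq_intros)
  from DERIV_chain2[OF DERIV_flat_exp[of 0 "1 - t"] this]
  have dB: "((\<lambda>t. flat_exp 0 (1 - t)) has_real_derivative - b) (at t)"
    by (simp add: b_def numeral_2_eq_2)
  have "(smooth_step has_real_derivative (a * (A + B) - A * (a + - b)) / ((A + B) * (A + B))) (at t)"
    unfolding smooth_step_def[abs_def] A_def B_def
    using DERIV_divide[OF dA DERIV_add[OF dA dB]] smooth_step_denominator_pos[of t] by simp
  moreover have "(a * (A + B) - A * (a + - b)) / ((A + B) * (A + B)) = smooth_step' t"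
    by (simp add: smooth_step'_def A_def B_def a_def b_def algebra_simps power2_eq_square)
  ultimately show ?thesis
    by simp
qed

lemma differentiable_upto_smooth_step: "differentiable_upto n smooth_step"
proof -
  have "differentiable_upto n (\<lambda>t. flat_exp 0 (- 1 * t + 1))"
    by (rule differentiable_upto_compose_affine[OF differentiable_upto_flat_exp])
  then have "differentiable_upto n (\<lambda>t. inverse (flat_exp 0 t + flat_exp 0 (1 - t)))"
    using smooth_step_denominator_pos
    by (intro differentiable_upto_inverse differentiable_upto_add differentiable_upto_flat_exp)
       (auto simp: less_imp_neq[symmetric])
  then show ?thesis
    unfolding smooth_step_def[abs_def] divide_inverse
    by (intro differentiable_upto_mult differentiable_upto_flat_exp)
qed

lemma isCont_smooth_step: "isCont smooth_step t"
  using DERIV_smooth_step DERIV_isCont by blast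

lemma isCont_smooth_step': "isCont smooth_step' t"
proof -
  have "deriv smooth_step = smooth_step'"
    using DERIV_smooth_step by (intro ext DERIV_imp_deriv)
  then show ?thesis
    using differentiable_upto_smooth_step[of 1] differentiable_upto_imp_isCont
    by (metis One_nat_def differentiable_upto_Suc)
qed

lemma smooth_step_eq_0: "t \<le> 0 \<Longrightarrow> smooth_step t = 0"
  by (simp add: smooth_step_def flat_exp_eq_0)

lemma smooth_step_eq_1: "t \<ge> 1 \<Longrightarrow> smooth_step t = 1"
  using smooth_step_denominator_pos[of t] by (simp add: smooth_step_def flat_exp_eq_0)

lemma smooth_step_bounds: "0 \<le> smooth_step t" "smooth_step t \<le> 1"
  using smooth_step_denominator_pos[of t] flat_exp_nonneg[of 0 t] flat_exp_nonneg[of 0 "1 - t"]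
  by (auto simp: smooth_step_def field_simps)

lemma smooth_step'_nonneg: "smooth_step' t \<ge> 0"
  unfolding smooth_step'_def by (intro divide_nonneg_nonneg add_nonneg_nonneg mult_nonneg_nonneg flat_exp_nonneg) auto

lemma smooth_step'_eq_0: "t \<le> 0 \<or> t \<ge> 1 \<Longrightarrow> smooth_step' t = 0"
  unfolding smooth_step'_def by (auto simp: flat_exp_eq_0)

definition step_kernel :: "real \<Rightarrow> real \<Rightarrow> real \<Rightarrow> real" where
  "step_kernel p e x = smooth_step' ((x - p) / e) / e"

lemma DERIV_smooth_step_rescaled:
  "e \<noteq> 0 \<Longrightarrow> ((\<lambda>x. smooth_step ((x - p) / e)) has_real_derivative step_kernel p e x) (at x)"
  unfolding step_kernel_def
  by (rule DERIV_chain2[OF DERIV_smooth_step, THEN DERIV_cong]) (auto intro!: derivative_eq_intros)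

lemma step_kernel_eq_0: "e > 0 \<Longrightarrow> x \<notin> {p..p + e} \<Longrightarrow> step_kernel p e x = 0"
  by (auto simp: step_kernel_def smooth_step'_eq_0 field_simps)

lemma step_kernel_nonneg: "e \<ge> 0 \<Longrightarrow> step_kernel p e x \<ge> 0"
  by (simp add: step_kernel_def smooth_step'_nonneg)

lemma isCont_step_kernel: "e \<noteq> 0 \<Longrightarrow> isCont (step_kernel p e) x"
  unfolding step_kernel_def[abs_def]
  by (intro continuous_intros isCont_o2[OF _ isCont_smooth_step'])

lemma integrable_mult_step_kernel:
  assumes "e > 0" and "continuous_on {p..p + e} h"
  shows "integrable lborel (\<lambda>x. h x * step_kernel p e x)"
proof -
  have "continuous_on {p..p + e} (step_kernel p e)"
    using assms(1) isCont_step_kernel by (simp add: continuous_at_imp_continuous_on)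
  then have "continuous_on {p..p + e} (\<lambda>x. h x * step_kernel p e x)"
    by (rule continuous_on_mult[OF assms(2)])
  then have "integrable lborel (\<lambda>x. indicator {p..p + e} x *\<^sub>R (h x * step_kernel p e x))"
    by (rule borel_integrable_compact[OF compact_Icc])
  moreover have "(\<lambda>x. indicator {p..p + e} x *\<^sub>R (h x * step_kernel p e x)) = (\<lambda>x. h x * step_kernel p e x)"
    using step_kernel_eq_0[OF assms(1)] by (auto simp: fun_eq_iff indicator_def)
  ultimately show ?thesis
    by simp
qed

lemma integral_step_kernel:
  assumes e: "e > 0"
  shows "(\<integral>x. step_kernel p e x \<partial>lborel) = 1"
proof -
  have "(\<integral>x. indicator {p..p + e} x *\<^sub>R step_kernel p e x \<partial>lborel)
      = smooth_step ((p + e - p) / e) - smooth_step ((p - p) / e)"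
  proof (rule integral_FTC_atLeastAtMost)
    show "continuous_on {p..p + e} (step_kernel p e)"
      using isCont_step_kernel e by (simp add: continuous_at_imp_continuous_on)
    show "((\<lambda>x. smooth_step ((x - p) / e)) has_vector_derivative step_kernel p e x) (at x within {p..p + e})"
      for x
      using DERIV_smooth_step_rescaled[of e p x] e
      by (simp add: has_real_derivative_iff_has_vector_derivative[symmetric] has_field_derivative_at_within)
  qed (use e in simp)
  moreover have "(\<lambda>x. indicator {p..p + e} x *\<^sub>R step_kernel p e x) = step_kernel p e"
    using step_kernel_eq_0[OF e] by (auto simp: fun_eq_iff indicator_def)
  ultimately show ?thesis
    using e by (simp add: smooth_step_eq_0 smooth_step_eq_1)
qed

lemma integral_mult_step_kernel_approx:
  fixes \<psi> :: "real \<Rightarrow> real"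
  assumes e: "e > 0" and cont: "continuous_on {p..p + e} \<psi>"
    and close: "\<And>x. x \<in> {p..p + e} \<Longrightarrow> \<bar>\<psi> x - \<psi> p\<bar> \<le> \<eta>"
  shows "\<bar>(\<integral>x. \<psi> x * step_kernel p e x \<partial>lborel) - \<psi> p\<bar> \<le> \<eta>"
proof -
  have kernel_int: "integrable lborel (step_kernel p e)"
    using integrable_mult_step_kernel[OF e, where h = "\<lambda>_. 1"] by simp
  have "(\<integral>x. \<psi> x * step_kernel p e x \<partial>lborel) - \<psi> p
      = (\<integral>x. \<psi> x * step_kernel p e x \<partial>lborel) - (\<integral>x. \<psi> p * step_kernel p e x \<partial>lborel)"
    using integral_step_kernel[OF e] by simp
  also have "\<dots> = (\<integral>x. (\<psi> x - \<psi> p) * step_kernel p e x \<partial>lborel)"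
    using integrable_mult_step_kernel[OF e cont] kernel_int by (simp add: left_diff_distrib)
  finally have "(\<integral>x. \<psi> x * step_kernel p e x \<partial>lborel) - \<psi> p
      = (\<integral>x. (\<psi> x - \<psi> p) * step_kernel p e x \<partial>lborel)" .
  also have "\<bar>\<dots>\<bar> \<le> (\<integral>x. \<eta> * step_kernel p e x \<partial>lborel)"
  proof (rule integral_abs_bound_integral)
    show "integrable lborel (\<lambda>x. (\<psi> x - \<psi> p) * step_kernel p e x)"
      using cont by (intro integrable_mult_step_kernel[OF e] continuous_intros)
    show "\<bar>(\<psi> x - \<psi> p) * step_kernel p e x\<bar> \<le> \<eta> * step_kernel p e x" for x
      using close[of x] step_kernel_nonneg[of e p x] e
      by (cases "x \<in> {p..p + e}") (auto simp: abs_mult step_kernel_eq_0 mult_right_mono)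
  qed (use kernel_int in simp)
  also have "\<dots> = \<eta>"
    using integral_step_kernel[OF e] by simp
  finally show ?thesis .
qed

lemma tendsto_integral_mult_step_kernel:
  fixes \<psi> :: "real \<Rightarrow> real"
  assumes cont: "continuous_on UNIV \<psi>" and p: "q \<longlonglongrightarrow> p" and e: "e \<longlonglongrightarrow> 0"
    and e_pos: "\<And>n. e n > 0"
  shows "(\<lambda>n. \<integral>x. \<psi> x * step_kernel (q n) (e n) x \<partial>lborel) \<longlonglongrightarrow> \<psi> p"
proof (rule tendstoI)
  fix r :: real
  assume r: "r > 0"
  obtain d where d: "d > 0" and close: "\<And>x. \<bar>x - p\<bar> < d \<Longrightarrow> \<bar>\<psi> x - \<psi> p\<bar> < r / 3"
    using cont r unfolding continuous_on_iff
    by (metis UNIV_I dist_real_def divide_pos_pos zero_less_numeral)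
  have "\<forall>\<^sub>F n in sequentially. \<bar>q n - p\<bar> < d / 2"
    using tendstoD[OF p, of "d / 2"] d by (simp add: dist_real_def)
  moreover have "\<forall>\<^sub>F n in sequentially. e n < d / 2"
    using order_tendstoD(2)[OF e, of "d / 2"] d by simp
  ultimately show "\<forall>\<^sub>F n in sequentially. dist (\<integral>x. \<psi> x * step_kernel (q n) (e n) x \<partial>lborel) (\<psi> p) < r"
  proof eventually_elim
    case (elim n)
    have q_close: "\<bar>\<psi> (q n) - \<psi> p\<bar> < r / 3"
      using elim d by (intro close) auto
    have "\<bar>\<psi> x - \<psi> (q n)\<bar> \<le> 2 * r / 3" if "x \<in> {q n..q n + e n}" for x
    proof -
      have "\<bar>x - p\<bar> < d"
        using that elim e_pos[of n] unfolding abs_less_iff by auto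
      then show ?thesis
        using close[of x] q_close by linarith
    qed
    then have "\<bar>(\<integral>x. \<psi> x * step_kernel (q n) (e n) x \<partial>lborel) - \<psi> (q n)\<bar> \<le> 2 * r / 3"
      by (intro integral_mult_step_kernel_approx e_pos continuous_on_subset[OF cont]) auto
    with q_close show ?case
      unfolding dist_real_def by linarith
  qed
qed

definition plateau :: "real \<Rightarrow> real \<Rightarrow> real \<Rightarrow> real \<Rightarrow> real" where
  "plateau a b e x = smooth_step ((x - a) / e) - smooth_step ((x - (b - e)) / e)"

lemma plateau_eq_0:
  assumes "e > 0" "2 * e \<le> b - a" "x \<notin> {a<..<b}"
  shows "plateau a b e x = 0"
proof (cases "x \<le> a")
  case True
  then have "(x - a) / e \<le> 0" "(x - (b - e)) / e \<le> 0"
    using assms by (auto simp: divide_nonpos_pos)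
  then show ?thesis
    by (simp add: plateau_def smooth_step_eq_0)
next
  case False
  then have "(x - a) / e \<ge> 1" "(x - (b - e)) / e \<ge> 1"
    using assms by (auto simp: field_simps)
  then show ?thesis
    by (simp add: plateau_def smooth_step_eq_1)
qed

lemma plateau_eq_1: "e > 0 \<Longrightarrow> a + e \<le> x \<Longrightarrow> x \<le> b - e \<Longrightarrow> plateau a b e x = 1"
  by (simp add: plateau_def smooth_step_eq_0 smooth_step_eq_1 field_simps)

lemma abs_plateau_le_1: "\<bar>plateau a b e x\<bar> \<le> 1"
  using smooth_step_bounds[of "(x - a) / e"] smooth_step_bounds[of "(x - (b - e)) / e"]
  by (simp add: plateau_def)

lemma isCont_plateau: "e \<noteq> 0 \<Longrightarrow> isCont (plateau a b e) x"
  unfolding plateau_def[abs_def] by (intro continuous_intros isCont_o2[OF _ isCont_smooth_step])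

lemma DERIV_plateau:
  "e \<noteq> 0 \<Longrightarrow> (plateau a b e has_real_derivative step_kernel a e x - step_kernel (b - e) e x) (at x)"
  unfolding plateau_def[abs_def] by (intro DERIV_diff DERIV_smooth_step_rescaled)

lemma test_function_plateau:
  assumes "e > 0" "2 * e \<le> b - a"
  shows "test_function (plateau a b e)"
proof (rule test_functionI)
  have "plateau a b e = (\<lambda>x. smooth_step ((1 / e) * x + - a / e) - smooth_step ((1 / e) * x + - (b - e) / e))"
    using assms(1) by (auto simp: plateau_def fun_eq_iff field_simps)
  then show "differentiable_upto n (plateau a b e)" for n
    by (simp only:) (intro differentiable_upto_diff differentiable_upto_compose_affine differentiable_upto_smooth_step)
  have "{x. plateau a b e x \<noteq> 0} \<subseteq> {a<..<b}"
    using plateau_eq_0[OF assms] by blast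
  then have "closure {x. plateau a b e x \<noteq> 0} \<subseteq> {a..b}"
    by (intro closure_minimal) auto
  then show "bounded (closure {x. plateau a b e x \<noteq> 0})"
    by (rule bounded_subset[OF bounded_closed_interval])
qed

lemma locally_integrable_mult_indicator:
  assumes "locally_integrable g"
  shows "integrable lborel (\<lambda>x. g x * indicator {a<..<b} x)"
proof -
  have "integrable lborel (\<lambda>x. (indicator {a..b} x *\<^sub>R g x) * indicator {a<..<b} x)"
    using assms unfolding locally_integrable_def set_integrable_def
    by (intro integrable_real_mult_indicator) auto
  moreover have "(\<lambda>x. (indicator {a..b} x *\<^sub>R g x) * indicator {a<..<b} x) = (\<lambda>x. g x * indicator {a<..<b} x)"
    by (auto simp: fun_eq_iff indicator_def)
  ultimately show ?thesis
    by simp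
qed

lemma tendsto_integral_mult_plateau:
  fixes g :: "real \<Rightarrow> real"
  assumes g: "integrable lborel (\<lambda>x. g x * indicator {a<..<b} x)"
    and e: "e \<longlonglongrightarrow> 0" and e_pos: "\<And>n. e n > 0" and e_le: "\<And>n. 2 * e n \<le> b - a"
  shows "(\<lambda>n. \<integral>x. g x * plateau a b (e n) x \<partial>lborel) \<longlonglongrightarrow> (\<integral>x. g x * indicator {a<..<b} x \<partial>lborel)"
proof (rule integral_dominated_convergence[where w = "\<lambda>x. \<bar>g x * indicator {a<..<b} x\<bar>"])
  have restrict: "g x * plateau a b (e n) x = (g x * indicator {a<..<b} x) * plateau a b (e n) x" for n x
    using plateau_eq_0[OF e_pos e_le] by (cases "x \<in> {a<..<b}") auto
  show "(\<lambda>x. g x * plateau a b (e n) x) \<in> borel_measurable lborel" for n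
  proof -
    have "continuous_on UNIV (plateau a b (e n))"
      using isCont_plateau e_pos[of n] by (simp add: continuous_at_imp_continuous_on)
    then have "plateau a b (e n) \<in> borel_measurable lborel"
      using borel_measurable_continuous_onI by simp
    then show ?thesis
      unfolding restrict by (intro borel_measurable_times borel_measurable_integrable[OF g])
  qed
  show "AE x in lborel. norm (g x * plateau a b (e n) x) \<le> \<bar>g x * indicator {a<..<b} x\<bar>" for n
    unfolding restrict using abs_plateau_le_1 by (auto simp: abs_mult mult_left_le)
  show "AE x in lborel. (\<lambda>n. g x * plateau a b (e n) x) \<longlonglongrightarrow> g x * indicator {a<..<b} x"
  proof (rule AE_I2)
    fix x
    show "(\<lambda>n. g x * plateau a b (e n) x) \<longlonglongrightarrow> g x * indicator {a<..<b} x"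
    proof (cases "x \<in> {a<..<b}")
      case False
      then show ?thesis
        using plateau_eq_0[OF e_pos e_le] by simp
    next
      case True
      then have "\<forall>\<^sub>F n in sequentially. e n < min (x - a) (b - x)"
        by (intro order_tendstoD(2)[OF e]) auto
      then have "\<forall>\<^sub>F n in sequentially. g x * indicator {a<..<b} x = g x * plateau a b (e n) x"
        by eventually_elim (use True e_pos in \<open>simp add: plateau_eq_1\<close>)
      then show ?thesis
        by (rule Lim_transform_eventually[OF tendsto_const])
    qed
  qed
qed (use g in auto)

lemma weak_deriv_FTC:
  fixes \<psi> g :: "real \<Rightarrow> real"
  assumes wd: "weak_deriv \<psi> g" and cont: "continuous_on UNIV \<psi>" and ab: "a < b"
  shows "\<psi> b - \<psi> a = (\<integral>x. g x * indicator {a<..<b} x \<partial>lborel)"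
proof -
  define e where "e n = (b - a) / 2 * inverse (real (Suc n))" for n
  have e_pos: "e n > 0" for n
    using ab by (simp add: e_def)
  have e_le: "2 * e n \<le> b - a" for n
    using ab mult_left_mono[of "inverse (real (Suc n))" 1 "b - a"] by (simp add: e_def inverse_le_1_iff)
  have e_lim: "e \<longlonglongrightarrow> 0"
    using tendsto_mult[OF tendsto_const LIMSEQ_inverse_real_of_nat, of "(b - a) / 2"]
    by (simp add: e_def[abs_def])
  have "(\<integral>x. \<psi> x * step_kernel a (e n) x \<partial>lborel) - (\<integral>x. \<psi> x * step_kernel (b - e n) (e n) x \<partial>lborel)
      = - (\<integral>x. g x * plateau a b (e n) x \<partial>lborel)" for n
  proof -
    have "deriv (plateau a b (e n)) = (\<lambda>x. step_kernel a (e n) x - step_kernel (b - e n) (e n) x)"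
      using DERIV_plateau e_pos[of n] by (intro ext DERIV_imp_deriv) auto
    moreover have "(\<integral>x. \<psi> x * deriv (plateau a b (e n)) x \<partial>lborel) = - (\<integral>x. g x * plateau a b (e n) x \<partial>lborel)"
      using wd test_function_plateau[OF e_pos e_le] unfolding weak_deriv_def by blast
    ultimately show ?thesis
      using integrable_mult_step_kernel[OF e_pos continuous_on_subset[OF cont]]
      by (simp add: right_diff_distrib)
  qed
  moreover have "(\<lambda>n. (\<integral>x. \<psi> x * step_kernel a (e n) x \<partial>lborel)
      - (\<integral>x. \<psi> x * step_kernel (b - e n) (e n) x \<partial>lborel)) \<longlonglongrightarrow> \<psi> a - \<psi> b"
  proof (rule tendsto_diff)
    show "(\<lambda>n. \<integral>x. \<psi> x * step_kernel a (e n) x \<partial>lborel) \<longlonglongrightarrow> \<psi> a"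
      by (rule tendsto_integral_mult_step_kernel[OF cont tendsto_const e_lim e_pos])
    show "(\<lambda>n. \<integral>x. \<psi> x * step_kernel (b - e n) (e n) x \<partial>lborel) \<longlonglongrightarrow> \<psi> b"
      using tendsto_integral_mult_step_kernel[OF cont tendsto_diff[OF tendsto_const e_lim] e_lim e_pos, of b]
      by simp
  qed
  ultimately have "(\<lambda>n. - (\<integral>x. g x * plateau a b (e n) x \<partial>lborel)) \<longlonglongrightarrow> \<psi> a - \<psi> b"
    by simp
  moreover have "(\<lambda>n. - (\<integral>x. g x * plateau a b (e n) x \<partial>lborel))
      \<longlonglongrightarrow> - (\<integral>x. g x * indicator {a<..<b} x \<partial>lborel)"
    using wd unfolding weak_deriv_def
    by (intro tendsto_minus tendsto_integral_mult_plateau locally_integrable_mult_indicator e_lim e_pos e_le) auto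
  ultimately show ?thesis
    using LIMSEQ_unique by fastforce
qed

lemma interval_length_mult_le_integral:
  fixes \<psi> :: "real \<Rightarrow> real"
  assumes nonneg: "\<And>y. \<psi> y \<ge> 0" and int: "integrable lborel \<psi>"
    and uv: "u \<le> v" and above: "\<And>x. x \<in> {u<..<v} \<Longrightarrow> \<psi> x > h"
  shows "(v - u) * h \<le> (\<integral>x. \<psi> x \<partial>lborel)"
proof -
  have "(v - u) * h = (\<integral>x. h * indicator {u<..<v} x \<partial>lborel)"
    using uv by simp
  also have "\<dots> \<le> (\<integral>x. \<psi> x * indicator {u<..<v} x \<partial>lborel)"
  proof (rule integral_mono)
    show "integrable lborel (\<lambda>x. h * indicator {u<..<v} x)"
      using uv by simp
    show "h * indicator {u<..<v} x \<le> \<psi> x * indicator {u<..<v} x" for x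
      using above[of x] by (auto simp: indicator_def less_imp_le)
  qed (use int in \<open>simp add: integrable_real_mult_indicator\<close>)
  also have "\<dots> \<le> (\<integral>x. \<psi> x \<partial>lborel)"
    using nonneg int by (intro integral_mono integrable_real_mult_indicator) (auto simp: indicator_def)
  finally show ?thesis .
qed

lemma exists_below_level:
  fixes \<psi> :: "real \<Rightarrow> real"
  assumes nonneg: "\<And>y. \<psi> y \<ge> 0" and int: "integrable lborel \<psi>" and h: "h > 0"
  shows "\<exists>x\<le>y. \<psi> x \<le> h" and "\<exists>x\<ge>y. \<psi> x \<le> h"
proof -
  define T where "T = (\<integral>x. \<psi> x \<partial>lborel) / h + 1"
  have "0 \<le> (\<integral>x. \<psi> x \<partial>lborel)"
    using nonneg by (intro Bochner_Integration.integral_nonneg)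
  then have T: "T * h > (\<integral>x. \<psi> x \<partial>lborel)" "T > 0"
    using h by (auto simp: T_def field_simps add_nonneg_pos)
  show "\<exists>x\<le>y. \<psi> x \<le> h"
  proof (rule ccontr)
    assume "\<not> (\<exists>x\<le>y. \<psi> x \<le> h)"
    then have "h < \<psi> x" if "x \<le> y" for x
      using that by (meson not_le)
    then have "(y - (y - T)) * h \<le> (\<integral>x. \<psi> x \<partial>lborel)"
      using T by (intro interval_length_mult_le_integral[OF nonneg int]) auto
    with T show False by simp
  qed
  show "\<exists>x\<ge>y. \<psi> x \<le> h"
  proof (rule ccontr)
    assume "\<not> (\<exists>x\<ge>y. \<psi> x \<le> h)"
    then have "h < \<psi> x" if "x \<ge> y" for x
      using that by (meson not_le)
    then have "((y + T) - y) * h \<le> (\<integral>x. \<psi> x \<partial>lborel)"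
      using T by (intro interval_length_mult_le_integral[OF nonneg int]) auto
    with T show False by simp
  qed
qed

lemma last_point_below_level:
  fixes \<psi> :: "real \<Rightarrow> real"
  assumes cont: "continuous_on UNIV \<psi>" and "x0 \<le> y" "\<psi> x0 \<le> h" "h < \<psi> y"
  obtains a where "a < y" "\<psi> a \<le> h" "\<And>x. a < x \<Longrightarrow> x \<le> y \<Longrightarrow> h < \<psi> x"
proof -
  define A where "A = {x. x \<le> y} \<inter> \<psi> -` {..h}"
  have "closed A"
    unfolding A_def using cont by (intro closed_Int closed_Collect_le closed_vimage) auto
  moreover have "A \<noteq> {}" "bdd_above A"
    using assms by (auto simp: A_def bdd_above_def)
  ultimately have "Sup A \<in> A"
    by (rule closed_contains_Sup[rotated -1])
  then have "Sup A \<le> y" "\<psi> (Sup A) \<le> h"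
    by (auto simp: A_def)
  moreover from this have "Sup A < y"
    using assms(4) by (cases "Sup A = y") auto
  moreover have "h < \<psi> x" if "Sup A < x" "x \<le> y" for x
    using that cSup_upper[OF _ \<open>bdd_above A\<close>, of x] by (force simp: A_def)
  ultimately show ?thesis
    using that by blast
qed

lemma first_point_below_level:
  fixes \<psi> :: "real \<Rightarrow> real"
  assumes cont: "continuous_on UNIV \<psi>" and "y \<le> x0" "\<psi> x0 \<le> h" "h < \<psi> y"
  obtains b where "y < b" "\<psi> b \<le> h" "\<And>x. y \<le> x \<Longrightarrow> x < b \<Longrightarrow> h < \<psi> x"
proof -
  have "continuous_on UNIV (\<lambda>x. \<psi> (- x))"
    using cont by (intro continuous_on_compose2[OF cont] continuous_intros) auto
  then obtain a where a: "a < - y" "\<psi> (- a) \<le> h" "\<And>x. a < x \<Longrightarrow> x \<le> - y \<Longrightarrow> h < \<psi> (- x)"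
    using assms by (elim last_point_below_level[of "\<lambda>x. \<psi> (- x)" "- x0" "- y" h]) auto
  show ?thesis
  proof (rule that[of "- a"])
    show "h < \<psi> x" if "y \<le> x" "x < - a" for x
      using a(3)[of "- x"] that by simp
  qed (use a in auto)
qed

lemma superlevel_interval:
  fixes \<psi> :: "real \<Rightarrow> real"
  assumes nonneg: "\<And>y. \<psi> y \<ge> 0" and int: "integrable lborel \<psi>" and cont: "continuous_on UNIV \<psi>"
    and h: "h > 0" "h < \<psi> y"
  obtains a b where "a < y" "y < b" "\<psi> a \<le> h" "\<psi> b \<le> h" "(b - a) * h \<le> (\<integral>x. \<psi> x \<partial>lborel)"
proof -
  obtain a where a: "a < y" "\<psi> a \<le> h" "\<And>x. a < x \<Longrightarrow> x \<le> y \<Longrightarrow> h < \<psi> x"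
    using exists_below_level(1)[OF nonneg int h(1)] last_point_below_level[OF cont _ _ h(2)] by metis
  obtain b where b: "y < b" "\<psi> b \<le> h" "\<And>x. y \<le> x \<Longrightarrow> x < b \<Longrightarrow> h < \<psi> x"
    using exists_below_level(2)[OF nonneg int h(1)] first_point_below_level[OF cont _ _ h(2)] by metis
  have "h < \<psi> x" if "x \<in> {a<..<b}" for x
    using a(3) b(3) that by (cases "x \<le> y") auto
  then have "(b - a) * h \<le> (\<integral>x. \<psi> x \<partial>lborel)"
    using a b by (intro interval_length_mult_le_integral[OF nonneg int]) auto
  with a b that show ?thesis
    by blast
qed

lemma square_integral_div_length_le:
  fixes g :: "real \<Rightarrow> real"
  assumes pq: "p < q" and g: "integrable lborel (\<lambda>x. g x * indicator {p<..<q} x)"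
  shows "ennreal ((\<integral>x. g x * indicator {p<..<q} x \<partial>lborel)\<^sup>2 / (q - p))
    \<le> (\<integral>\<^sup>+x. ennreal ((g x * indicator {p<..<q} x)\<^sup>2) \<partial>lborel)"
proof -
  define f where "f x = g x * indicator {p<..<q} x" for x
  have f: "integrable lborel f"
    using g by (simp add: f_def[abs_def])
  then have [measurable]: "f \<in> borel_measurable lborel"
    by (rule borel_measurable_integrable)
  have "ennreal (\<bar>\<integral>x. f x \<partial>lborel\<bar>) \<le> (\<integral>\<^sup>+x. ennreal \<bar>f x\<bar> \<partial>lborel)"
    using integral_norm_bound_ennreal[OF f] by simp
  also have "\<dots> = (\<integral>\<^sup>+x. ennreal \<bar>f x\<bar> * indicator {p<..<q} x \<partial>lborel)"
    by (intro nn_integral_cong) (simp add: f_def indicator_def)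
  finally have "ennreal (\<bar>\<integral>x. f x \<partial>lborel\<bar>) ^ 2 \<le> (\<integral>\<^sup>+x. ennreal \<bar>f x\<bar> * indicator {p<..<q} x \<partial>lborel) ^ 2"
    by (rule power_mono) simp
  also have "\<dots> \<le> (\<integral>\<^sup>+x. ennreal \<bar>f x\<bar> ^ 2 \<partial>lborel) * (\<integral>\<^sup>+x. indicator {p<..<q} x ^ 2 \<partial>lborel)"
    by (rule Cauchy_Schwarz_nn_integral) auto
  also have "\<dots> = (\<integral>\<^sup>+x. ennreal ((f x)\<^sup>2) \<partial>lborel) * ennreal (q - p)"
  proof -
    have "(\<lambda>x. indicator {p<..<q} x ^ 2 :: ennreal) = indicator {p<..<q}"
      by (auto simp: fun_eq_iff indicator_def)
    then show ?thesis
      using pq by (simp add: ennreal_power)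
  qed
  finally have "ennreal ((\<integral>x. f x \<partial>lborel)\<^sup>2) \<le> ennreal (q - p) * (\<integral>\<^sup>+x. ennreal ((f x)\<^sup>2) \<partial>lborel)"
    by (simp add: ennreal_power mult.commute)
  then have "ennreal ((\<integral>x. f x \<partial>lborel)\<^sup>2) / ennreal (q - p) \<le> (\<integral>\<^sup>+x. ennreal ((f x)\<^sup>2) \<partial>lborel)"
    using pq by (intro divide_le_posI_ennreal) auto
  then show ?thesis
    using pq by (simp add: f_def divide_ennreal)
qed

lemma ennreal_half_add:
  fixes u v :: real
  assumes "u \<ge> 0" "v \<ge> 0"
  shows "ennreal (u / 2 + v / 2) = ennreal (1/2) * (ennreal u + ennreal v)"
proof -
  have "u / 2 + v / 2 = (1/2) * (u + v)"
    by simp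
  moreover have "ennreal ((1/2) * (u + v)) = ennreal (1/2) * ennreal (u + v)"
    using assms by (intro ennreal_mult) auto
  moreover have "ennreal (u + v) = ennreal u + ennreal v"
    using assms by (rule ennreal_plus)
  ultimately show ?thesis
    by (simp only:)
qed

lemma dirichlet_integral_ge_two_intervals:
  fixes c g \<psi> :: "real \<Rightarrow> real"
  assumes c_nonneg: "\<And>s. s \<ge> 0 \<Longrightarrow> c s \<ge> 0" and g: "locally_integrable g"
    and am: "a < m" and mb: "m < b"
  shows "ennreal ((\<integral>x. g x * indicator {a<..<m} x \<partial>lborel)\<^sup>2 / (m - a) / 2
      + (\<integral>x. g x * indicator {m<..<b} x \<partial>lborel)\<^sup>2 / (b - m) / 2)
    \<le> (\<integral>\<^sup>+y. ennreal ((1/2) * \<bar>g y\<bar>\<^sup>2 + c \<bar>\<psi> y\<bar>) \<partial>lborel)"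
proof -
  define G where "G A x = ennreal ((g x * indicator A x)\<^sup>2)" for A x
  have G_meas: "G {u<..<v} \<in> borel_measurable lborel" for u v
    using borel_measurable_integrable[OF locally_integrable_mult_indicator[OF g, of u v]]
    unfolding G_def[abs_def] by measurable
  have "ennreal ((\<integral>x. g x * indicator {a<..<m} x \<partial>lborel)\<^sup>2 / (m - a) / 2
      + (\<integral>x. g x * indicator {m<..<b} x \<partial>lborel)\<^sup>2 / (b - m) / 2)
    = ennreal (1/2) * (ennreal ((\<integral>x. g x * indicator {a<..<m} x \<partial>lborel)\<^sup>2 / (m - a))
      + ennreal ((\<integral>x. g x * indicator {m<..<b} x \<partial>lborel)\<^sup>2 / (b - m)))"
    using am mb by (intro ennreal_half_add) auto
  also have "\<dots> \<le> ennreal (1/2) * ((\<integral>\<^sup>+x. G {a<..<m} x \<partial>lborel) + (\<integral>\<^sup>+x. G {m<..<b} x \<partial>lborel))"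
    unfolding G_def using am mb
    by (intro mult_left_mono add_mono square_integral_div_length_le locally_integrable_mult_indicator[OF g])
       auto
  also have "\<dots> = (\<integral>\<^sup>+x. ennreal (1/2) * (G {a<..<m} x + G {m<..<b} x) \<partial>lborel)"
    using G_meas by (simp add: nn_integral_add nn_integral_cmult)
  also have "\<dots> \<le> (\<integral>\<^sup>+y. ennreal ((1/2) * \<bar>g y\<bar>\<^sup>2 + c \<bar>\<psi> y\<bar>) \<partial>lborel)"
  proof (rule nn_integral_mono)
    fix x
    have "ennreal (1/2) * (G {a<..<m} x + G {m<..<b} x)
        = ennreal ((1/2) * ((g x * indicator {a<..<m} x)\<^sup>2 + (g x * indicator {m<..<b} x)\<^sup>2))"
      unfolding G_def by (subst ennreal_mult) auto
    also have "\<dots> \<le> ennreal ((1/2) * \<bar>g x\<bar>\<^sup>2 + c \<bar>\<psi> x\<bar>)"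
      using c_nonneg[of "\<bar>\<psi> x\<bar>"] am mb by (intro ennreal_leI) (auto simp: indicator_def)
    finally show "ennreal (1/2) * (G {a<..<m} x + G {m<..<b} x) \<le> ennreal ((1/2) * \<bar>g x\<bar>\<^sup>2 + c \<bar>\<psi> x\<bar>)" .
  qed
  finally show ?thesis .
qed

lemma cube_div_le_squares_div_lengths:
  fixes L1 L2 h w I1 I2 :: real
  assumes "L1 > 0" "L2 > 0" "h \<ge> 0" "w > 0" "(L1 + L2) * h \<le> w" "h \<le> \<bar>I1\<bar>" "h \<le> \<bar>I2\<bar>"
  shows "h ^ 3 / (w / 2) \<le> I1\<^sup>2 / L1 / 2 + I2\<^sup>2 / L2 / 2"
proof -
  have "(L1 + L2) * h * h\<^sup>2 \<le> w * h\<^sup>2"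
    using assms by (intro mult_right_mono) auto
  then have "h ^ 3 / (w / 2) \<le> 2 * h\<^sup>2 / (L1 + L2)"
    using assms by (simp add: field_simps power2_eq_square power3_eq_cube)
  also have "\<dots> \<le> h\<^sup>2 / L1 / 2 + h\<^sup>2 / L2 / 2"
  proof -
    have "4 * (L1 * L2) \<le> (L1 + L2)\<^sup>2"
      using sum_squares_ge_zero[of "L1 - L2" 0] by (simp add: power2_eq_square algebra_simps)
    then have "4 * (L1 * L2) * h\<^sup>2 \<le> (L1 + L2)\<^sup>2 * h\<^sup>2"
      by (rule mult_right_mono) simp
    then show ?thesis
      using assms by (simp add: field_simps power2_eq_square)
  qed
  also have "\<dots> \<le> I1\<^sup>2 / L1 / 2 + I2\<^sup>2 / L2 / 2"
  proof -
    have "h\<^sup>2 \<le> I1\<^sup>2" "h\<^sup>2 \<le> I2\<^sup>2"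
      using assms by (metis power2_abs power_mono)+
    then show ?thesis
      using assms by (intro add_mono divide_right_mono) auto
  qed
  finally show ?thesis .
qed

lemma energy_ge_oscillation:
  fixes c \<psi> :: "real \<Rightarrow> real"
  assumes c_nonneg: "\<And>s. s \<ge> 0 \<Longrightarrow> c s \<ge> 0" and cont: "continuous_on UNIV \<psi>"
    and am: "a < m" and mb: "m < b"
  shows "ennreal ((\<psi> m - \<psi> a)\<^sup>2 / (m - a) / 2 + (\<psi> b - \<psi> m)\<^sup>2 / (b - m) / 2) \<le> energy c \<psi>"
proof (cases "\<exists>g. weak_deriv \<psi> g")
  case False
  then show ?thesis
    by (simp add: energy_def)
next
  case True
  define g where "g = (SOME g. weak_deriv \<psi> g)"
  have wd: "weak_deriv \<psi> g"
    using True unfolding g_def by (rule someI_ex)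
  then have "locally_integrable g"
    by (simp add: weak_deriv_def)
  then have "ennreal ((\<psi> m - \<psi> a)\<^sup>2 / (m - a) / 2 + (\<psi> b - \<psi> m)\<^sup>2 / (b - m) / 2)
      \<le> (\<integral>\<^sup>+y. ennreal ((1/2) * \<bar>g y\<bar>\<^sup>2 + c \<bar>\<psi> y\<bar>) \<partial>lborel)"
    unfolding weak_deriv_FTC[OF wd cont am] weak_deriv_FTC[OF wd cont mb]
    using dirichlet_integral_ge_two_intervals[where c = c and \<psi> = \<psi>, OF c_nonneg _ am mb] by simp
  also have "\<dots> = energy c \<psi>"
    using True by (simp add: energy_def g_def)
  finally show ?thesis .
qed

theorem mainTheorem4:
  fixes c \<psi> :: "real \<Rightarrow> real" and w \<psi>max :: real
  assumes c_nonneg: "\<And>s. s \<ge> 0 \<Longrightarrow> c s \<ge> 0"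
    and psi_nonneg: "\<And>y. \<psi> y \<ge> 0"
    and psi_cont: "continuous_on UNIV \<psi>"
    and psi_int: "integrable lborel \<psi>"
    and mass: "(\<integral>y. \<psi> y \<partial>lborel) = w"
    and w_pos: "w > 0"
    and max_attained: "\<exists>y0. \<psi> y0 = \<psi>max"
    and max_bound: "\<And>y. \<psi> y \<le> \<psi>max"
  shows "energy c \<psi> \<ge> ennreal ((\<psi>max / 2) ^ 3 / (w / 2))"
proof -
  obtain y0 where y0: "\<psi> y0 = \<psi>max"
    using max_attained by blast
  obtain x where "\<psi> x \<noteq> 0"
    using mass w_pos by force
  then have "\<psi>max > 0"
    using psi_nonneg[of x] max_bound[of x] by linarith
  then have h: "\<psi>max / 2 > 0" "\<psi>max / 2 < \<psi> y0"
    using y0 by auto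
  then obtain a b where ab: "a < y0" "y0 < b" "\<psi> a \<le> \<psi>max / 2" "\<psi> b \<le> \<psi>max / 2"
    "(b - a) * (\<psi>max / 2) \<le> w"
    using superlevel_interval[OF psi_nonneg psi_int psi_cont] mass by metis
  then have "(\<psi>max / 2) ^ 3 / (w / 2)
      \<le> (\<psi> y0 - \<psi> a)\<^sup>2 / (y0 - a) / 2 + (\<psi> b - \<psi> y0)\<^sup>2 / (b - y0) / 2"
    using h y0 w_pos by (intro cube_div_le_squares_div_lengths) auto
  then show ?thesis
    by (rule order_trans[OF ennreal_leI energy_ge_oscillation[OF c_nonneg psi_cont ab(1,2)]])
qed

end
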